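(* Let $m$ be a positive integer and let $\mathcal{P}\in\mathbb{R}^{m\times 123}$ be the bar code forward map $\mathcal{P}=\alpha\,\mathcal{G}(\sigma)\,\mathcal{D}$ described in the context, with columns labelled $p^{(j)}_k$ ($j\in[15]$, $k\in K_j$). Let $I_1,\dots,I_{15}\subset[m]$ and $\varepsilon\in\mathbb{R}$ satisfy (i) $\big\| p^{(j)}_k|_{[m]\setminus I_j}\big\|_1<\varepsilon$ for all $j\in[15]$ and all $k\in K_j$; and (ii) $\Big\| \big(\sum_{j'=j+1}^{15} p^{(j')}_{k_{j'}}\big)\big|_{I_j}\Big\|_1<\varepsilon$ for all $j\in[15]$ and all choices $k_{j+1}\in K_{j+1},\dots,k_{15}\in K_{15}$ (the empty sum, for $j=15$, being $0$). Let $x\in\{0,1\}^{123}$ be a bar code vector, let $h\in\mathbb{R}^m$, and let $d=\mathcal{P}x+h$. Suppose that $$\big\| p^{(j)}_{k_1}|_{I_j}-p^{(j)}_{k_2}|_{I_j}\big\|_1>2\big(\|h|_{I_j}\|_1+2\varepsilon\big)$$ for all $j\in[15]$ and all $k_1,k_2\in K_j$ with $k_1\neq k_2$. Then Algorithm 1, run on input $d$, outputs $\hat x=x$ (regardless of how ties in the argmin are broken).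
   Context: Notation: $[m]=\{1,\dots,m\}$. For $v\in\mathbb{R}^m$ and $S\subset[m]$, $v|_S$ denotes the vector of entries of $v$ indexed by $S$, and $\|\cdot\|_1$ is the $\ell_1$ norm. Forward map. Let $n=95$, let $t_1,\dots,t_m\in[0,95]$ be equally spaced points, and let $\sigma>0$, $\alpha>0$. $\mathcal{G}(\sigma)\in\mathbb{R}^{m\times 95}$ has entries $\mathcal{G}_{kj}=\frac{1}{\sqrt{2\pi}\sigma}\int_{j-1}^{j} e^{-(t_k-t)^2/(2\sigma^2)}\,dt$. Let $L,R$ be the $7\times 10$ binary matrices whose $(d+1)$-st column ($d=0,\dots,9$) is respectively the L-pattern and the R-pattern of digit $d$, where the L-patterns for digits $0,\dots,9$ are $0001101,0011001,0010011,0111101,0100011,0110001,0101111,0111011,0110111,0001011$ and each R-pattern is the corresponding L-pattern with $0$s and $1$s interchanged. Let $S=E=(1,0,1)^T$ and $M=(0,1,0,1,0)^T$. $\mathcal{D}\in\{0,1\}^{95\times 123}$ is the block-diagonal matrix $\mathrm{diag}(S,L,L,L,L,L,L,M,R,R,R,R,R,R,E)$. Set $\mathcal{P}=\alpha\mathcal{G}(\sigma)\mathcal{D}$. Column labelling. Let $K_j=\{1\}$ for $j\in\{1,8,15\}$ and $K_j=[10]$ otherwise. $p^{(1)}_1$ is column 1 of $\mathcal{P}$; for $j=2,\dots,7$ and $k\in[10]$, $p^{(j)}_k$ is column $1+10(j-2)+k$; $p^{(8)}_1$ is column 62; for $j=9,\dots,14$ and $k\in[10]$, $p^{(j)}_k$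 is column $62+10(j-9)+k$; $p^{(15)}_1$ is column 123. Bar code vector: $x\in\{0,1\}^{123}$ with $x_1=x_{62}=x_{123}=1$ and such that each of the twelve consecutive blocks of $10$ entries with indices $2\!-\!11,12\!-\!21,\dots,52\!-\!61,63\!-\!72,\dots,113\!-\!122$ contains exactly one entry equal to $1$; equivalently $\mathcal{P}x=\sum_{j=1}^{15}p^{(j)}_{k_j}$ for some $k_j\in K_j$. Algorithm 1 (input $d\in\mathbb{R}^m$): set $\hat x_\ell=1$ for $\ell\in\{1,62,123\}$ and $\hat x_\ell=0$ otherwise; set $\delta\leftarrow d-p^{(1)}_1$. For $j=2,3,\dots,14$ in increasing order: if $j=8$, set $\delta\leftarrow\delta-p^{(8)}_1$; otherwise choose $k_{\min}\in\arg\min_{k\in[10]}\|\delta-p^{(j)}_k\|_1$, set $\hat x_\ell=1$ where $\ell$ is the column index of $p^{(j)}_{k_{\min}}$ (i.e. $\ell=1+10(j-2)+k_{\min}$ if $j\le7$, $\ell=62+10(j-9)+k_{\min}$ if $j\ge9$), and set $\delta\leftarrow\delta-p^{(j)}_{k_{\min}}$. Output $\hat x$. *)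

theory Defs
  imports "HOL-Analysis.Analysis"
begin

text \<open>Vectors in R^m are functions nat => real, indexed by 1..m.\<close>

definition norm1 :: "nat set \<Rightarrow> (nat \<Rightarrow> real) \<Rightarrow> real" where
  "norm1 S v = (\<Sum>i\<in>S. \<bar>v i\<bar>)"

definition gauss_G :: "(nat \<Rightarrow> real) \<Rightarrow> real \<Rightarrow> nat \<Rightarrow> nat \<Rightarrow> real" where
  "gauss_G t \<sigma> k j =
     integral {real j - 1 .. real j} (\<lambda>s. exp (- ((t k - s)^2) / (2 * \<sigma>^2))) / (sqrt (2 * pi) * \<sigma>)"

text \<open>L-patterns of the digits 0..9 (7 bits each); R-patterns are the complements.\<close>
definition Lpat :: "nat \<Rightarrow> real list" where
  "Lpat d = [[0,0,0,1,1,0,1],[0,0,1,1,0,0,1],[0,0,1,0,0,1,1],[0,1,1,1,1,0,1],[0,1,0,0,0,1,1],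
             [0,1,1,0,0,0,1],[0,1,0,1,1,1,1],[0,1,1,1,0,1,1],[0,1,1,0,1,1,1],[0,0,0,1,0,1,1]] ! d"

definition Rpat :: "nat \<Rightarrow> real list" where
  "Rpat d = map (\<lambda>b. 1 - b) (Lpat d)"

text \<open>Column c (1..123) of the block-diagonal matrix D = diag(S,L,...,L,M,R,...,R,E):
  a pair (row offset, nonzero column pattern).\<close>
definition Dcol :: "nat \<Rightarrow> nat \<times> real list" where
  "Dcol c =
    (if c = 1 then (0, [1,0,1])
     else if 2 \<le> c \<and> c \<le> 61 then (3 + 7 * ((c - 2) div 10), Lpat ((c - 2) mod 10))
     else if c = 62 then (45, [0,1,0,1,0])
     else if 63 \<le> c \<and> c \<le> 122 then (50 + 7 * ((c - 63) div 10), Rpat ((c - 63) mod 10))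
     else if c = 123 then (92, [1,0,1])
     else (0, []))"

definition Dmat :: "nat \<Rightarrow> nat \<Rightarrow> real" where
  "Dmat r c = (let (off, pat) = Dcol c in
     if off < r \<and> r \<le> off + length pat then pat ! (r - off - 1) else 0)"

definition Pmat :: "(nat \<Rightarrow> real) \<Rightarrow> real \<Rightarrow> real \<Rightarrow> nat \<Rightarrow> nat \<Rightarrow> real" where
  "Pmat t \<sigma> \<alpha> k c = \<alpha> * (\<Sum>r = 1..95. gauss_G t \<sigma> k r * Dmat r c)"

definition Kset :: "nat \<Rightarrow> nat set" where
  "Kset j = (if j \<in> {1, 8, 15} then {1} else {1..10})"

definition col :: "nat \<Rightarrow> nat \<Rightarrow> nat" where
  "col j k = (if j = 1 then 1
              else if j \<le> 7 then 1 + 10 * (j - 2) + k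
              else if j = 8 then 62
              else if j \<le> 14 then 62 + 10 * (j - 9) + k
              else 123)"

definition pcol :: "(nat \<Rightarrow> nat \<Rightarrow> real) \<Rightarrow> nat \<Rightarrow> nat \<Rightarrow> nat \<Rightarrow> real" where
  "pcol P j k = (\<lambda>r. P r (col j k))"

definition barcode_vec :: "(nat \<Rightarrow> real) \<Rightarrow> bool" where
  "barcode_vec x \<longleftrightarrow>
     (\<forall>c\<in>{1..123}. x c \<in> {0, 1}) \<and> x 1 = 1 \<and> x 62 = 1 \<and> x 123 = 1 \<and>
     (\<forall>i<6. card {c\<in>{2 + 10 * i .. 11 + 10 * i}. x c = 1} = 1) \<and>
     (\<forall>i<6. card {c\<in>{63 + 10 * i .. 72 + 10 * i}. x c = 1} = 1)"

text \<open>Algorithm 1. A run is determined by the sequence ks of chosen indices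
  k_min (ks j for j in 2..14, j /= 8). alg_delta P d ks n is the residual delta
  at the start of iteration j = n + 2.\<close>
primrec alg_delta :: "(nat \<Rightarrow> nat \<Rightarrow> real) \<Rightarrow> (nat \<Rightarrow> real) \<Rightarrow> (nat \<Rightarrow> nat) \<Rightarrow> nat \<Rightarrow> (nat \<Rightarrow> real)" where
  "alg_delta P d ks 0 = (\<lambda>r. d r - pcol P 1 1 r)"
| "alg_delta P d ks (Suc n) =
     (\<lambda>r. alg_delta P d ks n r - pcol P (n + 2) (if n + 2 = 8 then 1 else ks (n + 2)) r)"

text \<open>ks is a valid run of Algorithm 1 on input d (any tie-breaking in the argmin).\<close>
definition alg_run :: "nat \<Rightarrow> (nat \<Rightarrow> nat \<Rightarrow> real) \<Rightarrow> (nat \<Rightarrow> real) \<Rightarrow> (nat \<Rightarrow> nat) \<Rightarrow> bool" where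
  "alg_run m P d ks \<longleftrightarrow>
     (\<forall>j\<in>{2..14} - {8}. ks j \<in> {1..10} \<and>
        (\<forall>k\<in>{1..10}.
           norm1 {1..m} (\<lambda>r. alg_delta P d ks (j - 2) r - pcol P j (ks j) r)
             \<le> norm1 {1..m} (\<lambda>r. alg_delta P d ks (j - 2) r - pcol P j k r)))"

definition alg_out :: "(nat \<Rightarrow> nat) \<Rightarrow> nat \<Rightarrow> real" where
  "alg_out ks c = (if c \<in> {1, 62, 123} \<or> (\<exists>j\<in>{2..14} - {8}. c = col j (ks j)) then 1 else 0)"

end

theory Submission
  imports Defs
begin

text \<open>Algorithm 1 peels the columns of P x off one block at a time. If the digits of the
  blocks before j were decoded correctly, the residual at step j is the true column of block j
  plus the tail of later columns plus the noise h. Off I j every candidate column has l1-mass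
  below \<epsilon> by (i), on I j the tail has mass below \<epsilon> by (ii), so the separation hypothesis
  makes the true digit the unique l1-minimiser, and induction over the blocks gives exact
  recovery. Nothing about the Gaussian blur is used: the argument works for any matrix P.\<close>

lemma col_in_range:
  assumes "j \<in> {1..15}" "k \<in> Kset j"
  shows "col j k \<in> {1..123}"
  using assms by (auto simp: col_def Kset_def)

definition block_of :: "nat \<Rightarrow> nat" where
  "block_of c = (if c = 1 then 1 else if c \<le> 61 then (c - 2) div 10 + 2 else if c = 62 then 8
                 else if c \<le> 122 then (c - 63) div 10 + 9 else 15)"

lemma block_of_col:
  assumes "j \<in> {1..15}" "k \<in> Kset j"
  shows "block_of (col j k) = j"
proof -
  consider "j \<in> {1, 8, 15}" | "2 \<le> j" "j \<le> 7" | "9 \<le> j" "j \<le> 14"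
    using assms(1) by force
  then show ?thesis
  proof cases
    case 2
    have k: "1 \<le> k" "k \<le> 10" using 2 assms(2) by (auto simp: Kset_def)
    have "col j k = 1 + 10 * (j - 2) + k" using 2 by (simp add: col_def)
    moreover have "(10 * (j - 2) + (k - 1)) div 10 = j - 2" using k by simp
    ultimately show ?thesis using 2 k by (auto simp: block_of_def add.commute)
  next
    case 3
    have k: "1 \<le> k" "k \<le> 10" using 3 assms(2) by (auto simp: Kset_def)
    have "col j k = 62 + 10 * (j - 9) + k" using 3 by (simp add: col_def)
    moreover have "(10 * (j - 9) + (k - 1)) div 10 = j - 9" using k by simp
    ultimately show ?thesis using 3 k by (auto simp: block_of_def add.commute)
  qed (auto simp: block_of_def col_def)
qed

lemma col_surj:
  assumes "c \<in> {1..123}"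
  obtains j k where "j \<in> {1..15}" "k \<in> Kset j" "c = col j k"
proof -
  consider "c \<in> {1, 62, 123}" | "2 \<le> c" "c \<le> 61" | "63 \<le> c" "c \<le> 122"
    using assms by force
  then show ?thesis
  proof cases
    case 1
    then show ?thesis using that[of 1 1] that[of 8 1] that[of 15 1] by (auto simp: col_def Kset_def)
  next
    case 2
    let ?j = "(c - 2) div 10 + 2" and ?k = "(c - 2) mod 10 + 1"
    have "c = col ?j ?k" "?j \<in> {1..15}" "?k \<in> Kset ?j" using 2 by (auto simp: col_def Kset_def)
    then show ?thesis by (rule that[rotated -1])
  next
    case 3
    let ?j = "(c - 63) div 10 + 9" and ?k = "(c - 63) mod 10 + 1"
    have "c = col ?j ?k" "?j \<in> {1..15}" "?k \<in> Kset ?j" using 3 by (auto simp: col_def Kset_def)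
    then show ?thesis by (rule that[rotated -1])
  qed
qed

lemma inj_on_col:
  assumes "\<forall>j\<in>{1..15}. kk j \<in> Kset j"
  shows "inj_on (\<lambda>j. col j (kk j)) {1..15}"
  by (rule inj_on_inverseI[where g = block_of]) (use assms block_of_col in blast)

definition barcode_of :: "(nat \<Rightarrow> nat) \<Rightarrow> nat \<Rightarrow> real" where
  "barcode_of kk c = (if \<exists>j\<in>{1..15}. c = col j (kk j) then 1 else 0)"

lemma barcode_of_cong:
  assumes "\<forall>j\<in>{2..14} - {8}. kk j = kk' j"
  shows "barcode_of kk = barcode_of kk'"
proof -
  have "col j (kk j) = col j (kk' j)" if "j \<in> {1..15}" for j
    using assms that by (cases "j \<in> {1, 8, 15}") (auto simp: col_def)
  then show ?thesis unfolding barcode_of_def by (intro ext) (metis (no_types, lifting))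
qed

lemma alg_out_eq_barcode_of: "alg_out ks = barcode_of ks"
proof
  fix c
  have "{1..15} = {1, 8, 15} \<union> ({2..14} - {8::nat})" by auto
  then have "(\<exists>j\<in>{1..15}. c = col j (ks j)) \<longleftrightarrow>
        c \<in> {1, 62, 123} \<or> (\<exists>j\<in>{2..14} - {8}. c = col j (ks j))"
    by (simp only: bex_Un) (auto simp: col_def)
  then show "alg_out ks c = barcode_of ks c"
    by (auto simp: alg_out_def barcode_of_def)
qed

lemma forward_barcode_of:
  fixes P :: "nat \<Rightarrow> nat \<Rightarrow> real"
  assumes "\<forall>j\<in>{1..15}. kk j \<in> Kset j"
  shows "(\<Sum>c = 1..123. P r c * barcode_of kk c) = (\<Sum>j = 1..15. pcol P j (kk j) r)"
proof -
  let ?cols = "(\<lambda>j. col j (kk j)) ` {1..15}"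
  have cols: "?cols \<subseteq> {1..123}" using assms col_in_range by auto
  have "(\<Sum>c = 1..123. P r c * barcode_of kk c) = (\<Sum>c\<in>{1..123}. if c \<in> ?cols then P r c else 0)"
    by (rule sum.cong) (auto simp: barcode_of_def)
  also have "\<dots> = sum (P r) ?cols"
    using sum.inter_restrict[of "{1..123}" "P r" ?cols] cols by (simp add: inf.absorb2)
  also have "\<dots> = (\<Sum>j = 1..15. pcol P j (kk j) r)"
    using sum.reindex[OF inj_on_col[OF assms]] by (simp add: pcol_def)
  finally show ?thesis .
qed

lemma card_eq_1_window:
  fixes x :: "nat \<Rightarrow> real"
  assumes "card {c\<in>{a + 1..a + 10}. x c = 1} = 1"
  shows "\<exists>k\<in>{1..10}. \<forall>k'\<in>{1..10}. x (a + k') = 1 \<longleftrightarrow> k' = k"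
proof -
  obtain c0 where c0: "{c\<in>{a + 1..a + 10}. x c = 1} = {c0}"
    using assms card_1_singletonE by blast
  then have "c0 \<in> {c\<in>{a + 1..a + 10}. x c = 1}" by simp
  then have c0_range: "a + 1 \<le> c0" "c0 \<le> a + 10" by simp_all
  moreover have "x (a + k') = 1 \<longleftrightarrow> k' = c0 - a" if "k' \<in> {1..10}" for k'
  proof -
    have "x (a + k') = 1 \<longleftrightarrow> a + k' \<in> {c\<in>{a + 1..a + 10}. x c = 1}"
      using that by simp
    also have "\<dots> \<longleftrightarrow> k' = c0 - a"
      using c0_range by (simp only: c0) auto
    finally show ?thesis .
  qed
  ultimately show ?thesis
    using c0_range by (intro bexI[of _ "c0 - a"]) auto
qed

lemma barcode_vec_digit:
  assumes "barcode_vec x" "j \<in> {2..14} - {8}"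
  shows "\<exists>k\<in>{1..10}. \<forall>k'\<in>{1..10}. x (col j k') = 1 \<longleftrightarrow> k' = k"
proof -
  define a where "a = (if j \<le> 7 then 1 + 10 * (j - 2) else 62 + 10 * (j - 9))"
  have "col j k = a + k" for k
    using assms(2) by (auto simp: col_def a_def)
  moreover have "card {c\<in>{a + 1..a + 10}. x c = 1} = 1"
  proof (cases "j \<le> 7")
    case True
    have "\<forall>i<6. card {c\<in>{2 + 10 * i..11 + 10 * i}. x c = 1} = 1"
      using assms(1) unfolding barcode_vec_def by blast
    then have "card {c\<in>{2 + 10 * (j - 2)..11 + 10 * (j - 2)}. x c = 1} = 1"
      using True assms(2) by auto
    moreover have "a + 1 = 2 + 10 * (j - 2)" "a + 10 = 11 + 10 * (j - 2)"
      using True by (simp_all add: a_def)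
    ultimately show ?thesis by simp
  next
    case False
    have "\<forall>i<6. card {c\<in>{63 + 10 * i..72 + 10 * i}. x c = 1} = 1"
      using assms(1) unfolding barcode_vec_def by blast
    then have "card {c\<in>{63 + 10 * (j - 9)..72 + 10 * (j - 9)}. x c = 1} = 1"
      using False assms(2) by auto
    moreover have "a + 1 = 63 + 10 * (j - 9)" "a + 10 = 72 + 10 * (j - 9)"
      using False by (simp_all add: a_def)
    ultimately show ?thesis by simp
  qed
  ultimately show ?thesis
    by (simp only:) (rule card_eq_1_window)
qed

lemma barcode_vec_eq_barcode_of:
  assumes x: "barcode_vec x"
  obtains kx where "\<forall>j\<in>{1..15}. kx j \<in> Kset j" "\<forall>c\<in>{1..123}. x c = barcode_of kx c"
proof -
  obtain f where f: "\<forall>j\<in>{2..14} - {8}. f j \<in> {1..10} \<and> (\<forall>k\<in>{1..10}. x (col j k) = 1 \<longleftrightarrow> k = f j)"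
    using barcode_vec_digit[OF x] by metis
  define kx where "kx j = (if j \<in> {2..14} - {8} then f j else 1)" for j
  have kx: "\<forall>j\<in>{1..15}. kx j \<in> Kset j"
    using f by (auto simp: kx_def Kset_def)
  have "x c = 1 \<longleftrightarrow> (\<exists>j\<in>{1..15}. c = col j (kx j))" if c: "c \<in> {1..123}" for c
  proof -
    obtain j k where jk: "j \<in> {1..15}" "k \<in> Kset j" "c = col j k"
      using col_surj[OF c] .
    have "x c = 1 \<longleftrightarrow> c = col j (kx j)"
    proof (cases "j \<in> {2..14} - {8}")
      case True
      then have "x c = 1 \<longleftrightarrow> k = f j"
        using f jk by (auto simp: Kset_def)
      also have "\<dots> \<longleftrightarrow> c = col j (kx j)"
        using True jk by (auto simp: kx_def col_def)
      finally show ?thesis .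
    next
      case False
      then have "j \<in> {1, 8, 15}" using jk(1) by auto
      then show ?thesis using x jk by (auto simp: barcode_vec_def col_def)
    qed
    also have "\<dots> \<longleftrightarrow> (\<exists>j\<in>{1..15}. c = col j (kx j))"
    proof
      assume "\<exists>j'\<in>{1..15}. c = col j' (kx j')"
      then obtain j' where "j' \<in> {1..15}" "c = col j' (kx j')" by blast
      moreover from this have "j' = j"
        using block_of_col[OF jk(1,2)] block_of_col[of j' "kx j'"] kx jk(3) by auto
      ultimately show "c = col j (kx j)" by simp
    qed (use jk in blast)
    finally show ?thesis .
  qed
  moreover have "x c \<in> {0, 1}" if "c \<in> {1..123}" for c
    using x that by (auto simp: barcode_vec_def)
  ultimately have "\<forall>c\<in>{1..123}. x c = barcode_of kx c"
    by (force simp: barcode_of_def)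
  with kx that show ?thesis by blast
qed

text \<open>On I the residual of the true column q1 is T + h, while that of q2 is at least
  q1 - q2 - (T + h); off I both columns cost less than \<epsilon>.\<close>

lemma norm1_residual_less:
  fixes A I :: "nat set" and q1 q2 T h \<delta> :: "nat \<Rightarrow> real" and \<epsilon> :: real
  assumes "finite A" "I \<subseteq> A" "\<And>r. \<delta> r = q1 r + T r + h r"
    and "norm1 (A - I) q1 < \<epsilon>" "norm1 (A - I) q2 < \<epsilon>" "norm1 I T < \<epsilon>"
    and "norm1 I (\<lambda>r. q1 r - q2 r) > 2 * (norm1 I h + 2 * \<epsilon>)"
  shows "norm1 A (\<lambda>r. \<delta> r - q1 r) < norm1 A (\<lambda>r. \<delta> r - q2 r)"
proof -
  have split: "norm1 A f = norm1 (A - I) f + norm1 I f" for f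
    unfolding norm1_def using sum.subset_diff[OF assms(2,1)] by blast
  have outside: "(\<Sum>r\<in>A - I. \<bar>\<delta> r - q1 r\<bar>) \<le> (\<Sum>r\<in>A - I. \<bar>\<delta> r - q2 r\<bar> + \<bar>q1 r\<bar> + \<bar>q2 r\<bar>)"
    by (rule sum_mono) linarith
  have inside: "(\<Sum>r\<in>I. \<bar>\<delta> r - q1 r\<bar>) \<le> (\<Sum>r\<in>I. \<bar>T r\<bar> + \<bar>h r\<bar>)"
    by (rule sum_mono) (simp add: assms(3))
  have separation: "(\<Sum>r\<in>I. \<bar>q1 r - q2 r\<bar>) \<le> (\<Sum>r\<in>I. \<bar>\<delta> r - q2 r\<bar> + \<bar>T r\<bar> + \<bar>h r\<bar>)"
    by (rule sum_mono) (unfold assms(3), arith)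
  show ?thesis
    using outside inside separation assms(4-7) split[of "\<lambda>r. \<delta> r - q1 r"] split[of "\<lambda>r. \<delta> r - q2 r"]
    unfolding norm1_def by (simp add: sum.distrib)
qed

lemma alg_delta_eq_tail:
  assumes kx: "\<forall>j\<in>{1..15}. kx j \<in> Kset j"
    and d: "\<And>r. d r = (\<Sum>j = 1..15. pcol P j (kx j) r) + h r"
    and "n \<le> 13" "\<forall>j\<in>{2..n + 1} - {8}. ks j = kx j"
  shows "alg_delta P d ks n r = (\<Sum>j = n + 2..15. pcol P j (kx j) r) + h r"
proof -
  have "kx 1 \<in> Kset 1" "kx 8 \<in> Kset 8" using kx by simp_all
  then have outer: "kx 1 = 1" "kx 8 = 1" by (simp_all add: Kset_def)
  show ?thesis
    using assms(3,4)
  proof (induction n)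
    case 0
    then show ?case
      using outer by (simp add: d sum.atLeast_Suc_atMost numeral_2_eq_2)
  next
    case (Suc n)
    have "(if n + 2 = 8 then 1 else ks (n + 2)) = kx (n + 2)"
      using Suc.prems outer by auto
    then show ?case
      using Suc by (simp add: sum.atLeast_Suc_atMost)
  qed
qed

context
  fixes m :: nat and P :: "nat \<Rightarrow> nat \<Rightarrow> real" and I :: "nat \<Rightarrow> nat set"
    and \<epsilon> :: real and h :: "nat \<Rightarrow> real"
  assumes I_sub: "\<forall>j\<in>{1..15}. I j \<subseteq> {1..m}"
    and cond_i: "\<forall>j\<in>{1..15}. \<forall>k\<in>Kset j. norm1 ({1..m} - I j) (pcol P j k) < \<epsilon>"
    and cond_ii: "\<forall>j\<in>{1..15}. \<forall>kk :: nat \<Rightarrow> nat.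
                   (\<forall>j'\<in>{j + 1..15}. kk j' \<in> Kset j') \<longrightarrow>
                   norm1 (I j) (\<lambda>r. \<Sum>j'\<in>{j + 1..15}. pcol P j' (kk j') r) < \<epsilon>"
    and sep: "\<forall>j\<in>{1..15}. \<forall>k1\<in>Kset j. \<forall>k2\<in>Kset j. k1 \<noteq> k2 \<longrightarrow>
                norm1 (I j) (\<lambda>r. pcol P j k1 r - pcol P j k2 r) > 2 * (norm1 (I j) h + 2 * \<epsilon>)"
begin

lemma alg_run_step_correct:
  assumes kx: "\<forall>j\<in>{1..15}. kx j \<in> Kset j"
    and run: "alg_run m P d ks"
    and j: "j \<in> {2..14} - {8}"
    and residual: "\<And>r. alg_delta P d ks (j - 2) r = (\<Sum>j' = j..15. pcol P j' (kx j') r) + h r"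
  shows "ks j = kx j"
proof (rule ccontr)
  assume ne: "ks j \<noteq> kx j"
  let ?\<delta> = "alg_delta P d ks (j - 2)"
  have j15: "j \<in> {1..15}" and Kj: "Kset j = {1..10}" using j by (auto simp: Kset_def)
  have kxj: "kx j \<in> Kset j" using kx j15 by blast
  have ksj: "ks j \<in> Kset j"
    and argmin: "\<forall>k\<in>Kset j. norm1 {1..m} (\<lambda>r. ?\<delta> r - pcol P j (ks j) r) \<le> norm1 {1..m} (\<lambda>r. ?\<delta> r - pcol P j k r)"
    using run j unfolding alg_run_def Kj by blast+
  have minimal: "norm1 {1..m} (\<lambda>r. ?\<delta> r - pcol P j (ks j) r) \<le> norm1 {1..m} (\<lambda>r. ?\<delta> r - pcol P j (kx j) r)"
    using argmin kxj by blast
  have "norm1 {1..m} (\<lambda>r. ?\<delta> r - pcol P j (kx j) r) < norm1 {1..m} (\<lambda>r. ?\<delta> r - pcol P j (ks j) r)"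
  proof (rule norm1_residual_less[where T = "\<lambda>r. \<Sum>j'\<in>{j + 1..15}. pcol P j' (kx j') r"])
    show "I j \<subseteq> {1..m}" using I_sub j15 by blast
    show "?\<delta> r = pcol P j (kx j) r + (\<Sum>j'\<in>{j + 1..15}. pcol P j' (kx j') r) + h r" for r
      using j by (simp add: residual sum.atLeast_Suc_atMost)
    show "norm1 (I j) (\<lambda>r. \<Sum>j'\<in>{j + 1..15}. pcol P j' (kx j') r) < \<epsilon>"
      using cond_ii j15 kx by simp
  qed (use cond_i sep j15 kxj ksj ne in auto)
  with minimal show False by simp
qed

lemma alg_run_recovers_digits:
  assumes kx: "\<forall>j\<in>{1..15}. kx j \<in> Kset j"
    and d: "\<And>r. d r = (\<Sum>j = 1..15. pcol P j (kx j) r) + h r"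
    and run: "alg_run m P d ks"
  shows "\<forall>j\<in>{2..14} - {8}. ks j = kx j"
proof -
  have "\<forall>j\<in>{2..n + 1} - {8}. ks j = kx j" if "n \<le> 13" for n
    using that
  proof (induction n)
    case 0
    then show ?case by simp
  next
    case (Suc n)
    then have IH: "\<forall>j\<in>{2..n + 1} - {8}. ks j = kx j" by simp
    have new: "ks (n + 2) = kx (n + 2)" if "n + 2 \<noteq> 8"
    proof (rule alg_run_step_correct[OF kx run])
      show "n + 2 \<in> {2..14} - {8}" using Suc.prems that by simp
      show "alg_delta P d ks (n + 2 - 2) r = (\<Sum>j = n + 2..15. pcol P j (kx j) r) + h r" for r
        using alg_delta_eq_tail[OF kx d] Suc.prems IH by simp
    qed
    show ?case
    proof
      fix j assume "j \<in> {2..Suc n + 1} - {8}"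
      then consider "j \<in> {2..n + 1} - {8}" | "j = n + 2" "n + 2 \<noteq> 8" by force
      then show "ks j = kx j" using IH new by cases auto
    qed
  qed
  from this[of 13] show ?thesis by simp
qed

lemma algorithm1_correct:
  assumes x: "barcode_vec x"
    and run: "alg_run m P (\<lambda>r. (\<Sum>c = 1..123. P r c * x c) + h r) ks"
  shows "\<forall>c\<in>{1..123}. alg_out ks c = x c"
proof -
  obtain kx where kx: "\<forall>j\<in>{1..15}. kx j \<in> Kset j"
    and x_eq: "\<forall>c\<in>{1..123}. x c = barcode_of kx c"
    using barcode_vec_eq_barcode_of[OF x] .
  have "(\<Sum>c = 1..123. P r c * x c) + h r = (\<Sum>j = 1..15. pcol P j (kx j) r) + h r" for r
    using x_eq forward_barcode_of[OF kx, of P r] by simp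
  then have "\<forall>j\<in>{2..14} - {8}. ks j = kx j"
    using alg_run_recovers_digits[OF kx _ run] by blast
  then have "alg_out ks = barcode_of kx"
    by (simp add: alg_out_eq_barcode_of barcode_of_cong)
  with x_eq show ?thesis by simp
qed

end

theorem theorem1:
  fixes m :: nat and t :: "nat \<Rightarrow> real" and \<sigma> \<alpha> \<epsilon> :: real
    and I :: "nat \<Rightarrow> nat set" and x h :: "nat \<Rightarrow> real"
  assumes m_pos: "m > 0"
    and sigma_pos: "\<sigma> > 0" and alpha_pos: "\<alpha> > 0"
    and t_range: "\<forall>k\<in>{1..m}. t k \<in> {0..95}"
    and t_equi: "\<forall>k\<in>{1..<m}. t (k + 1) - t k = t 2 - t 1"
    and I_sub: "\<forall>j\<in>{1..15}. I j \<subseteq> {1..m}"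
    and cond_i: "\<forall>j\<in>{1..15}. \<forall>k\<in>Kset j.
                   norm1 ({1..m} - I j) (pcol (Pmat t \<sigma> \<alpha>) j k) < \<epsilon>"
    and cond_ii: "\<forall>j\<in>{1..15}. \<forall>kk :: nat \<Rightarrow> nat.
                   (\<forall>j'\<in>{j+1..15}. kk j' \<in> Kset j') \<longrightarrow>
                   norm1 (I j) (\<lambda>r. \<Sum>j'\<in>{j+1..15}. pcol (Pmat t \<sigma> \<alpha>) j' (kk j') r) < \<epsilon>"
    and x_bar: "barcode_vec x"
    and sep: "\<forall>j\<in>{1..15}. \<forall>k1\<in>Kset j. \<forall>k2\<in>Kset j. k1 \<noteq> k2 \<longrightarrow>
                norm1 (I j) (\<lambda>r. pcol (Pmat t \<sigma> \<alpha>) j k1 r - pcol (Pmat t \<sigma> \<alpha>) j k2 r)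
                  > 2 * (norm1 (I j) h + 2 * \<epsilon>)"
  shows "\<forall>ks. alg_run m (Pmat t \<sigma> \<alpha>)
                (\<lambda>r. (\<Sum>c = 1..123. Pmat t \<sigma> \<alpha> r c * x c) + h r) ks
             \<longrightarrow> (\<forall>c\<in>{1..123}. alg_out ks c = x c)"
  using algorithm1_correct[OF I_sub cond_i cond_ii sep x_bar] by blast

end
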